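(* Let $0<\theta_m<\theta_M$, $\Theta=(\theta_m,\theta_M)$, $\alpha>0$, $r>0$. Suppose $v(x,t)$ is a smooth function satisfying, at some point $(x_0,t_0)$, $v_t(x_0,t_0)-H(\partial_xv(x_0,t_0))=-a$ for some $a>0$. Set $\lambda=\partial_xv(x_0,t_0)$, let $Q(\theta)>0$ be the normalized eigenfunction associated with $H(\lambda)$ (see context), and define $v^\varepsilon(x,\theta,t)=v(x,t)+\varepsilon\ln Q(\theta)$. Then there exist positive constants $s,\varepsilon_1$ such that for all $(x,t)\in B_s(x_0,t_0)$, all $\theta\in\Theta$ and all $0<\varepsilon\le\varepsilon_1$, $$v^\varepsilon_t-\varepsilon\theta v^\varepsilon_{xx}-\theta(v^\varepsilon_x)^2-\frac{\alpha}{\varepsilon}v^\varepsilon_{\theta\theta}-\frac{\alpha}{\varepsilon^2}(v^\varepsilon_\theta)^2-r\le-\frac a2,$$ where all terms are evaluated at $(x,\theta,t)$.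
   Context: $H:\mathbb{R}\to\mathbb{R}$ and $Q$: for each $\lambda\in\mathbb{R}$, $H(\lambda)$ is the unique real number for which there exists $Q=Q(\cdot,\lambda)>0$ on $\bar\Theta$ with $\int_\Theta Q\,d\theta=1$, $(-H(\lambda)+\theta\lambda^2+r)Q+\alpha Q''=0$ on $\Theta$ and $Q'(\theta_m)=Q'(\theta_M)=0$ (and $Q$ is then unique). *)

theory Defs
  imports "HOL-Analysis.Analysis"
begin

text \<open>Smoothness (C-infinity) of a function of two real variables (x,t) on a set U:
  it is (Frechet) differentiable at every point of U, with partial derivatives
  fx, ft that are again smooth on U (coinductively: derivatives of all orders exist).\<close>
coinductive smooth2_on :: "(real \<times> real) set \<Rightarrow> (real \<Rightarrow> real \<Rightarrow> real) \<Rightarrow> bool" where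
  "(\<forall>p\<in>U. ((\<lambda>(x,t). f x t) has_derivative (\<lambda>(h,k). fx (fst p) (snd p) * h + ft (fst p) (snd p) * k)) (at p))
   \<Longrightarrow> smooth2_on U fx \<Longrightarrow> smooth2_on U ft \<Longrightarrow> smooth2_on U f"

definition eigpair :: "real \<Rightarrow> real \<Rightarrow> real \<Rightarrow> real \<Rightarrow> real \<Rightarrow> real \<Rightarrow> (real \<Rightarrow> real) \<Rightarrow> bool" where
  "eigpair \<theta>\<^sub>m \<theta>\<^sub>M \<alpha> r lam h Q \<longleftrightarrow>
     (\<forall>\<theta>\<in>{\<theta>\<^sub>m..\<theta>\<^sub>M}. 0 < Q \<theta>) \<and> integral {\<theta>\<^sub>m..\<theta>\<^sub>M} Q = 1 \<and>
     (\<exists>Q1 Q2. (\<forall>\<theta>\<in>{\<theta>\<^sub>m..\<theta>\<^sub>M}. (Q has_real_derivative Q1 \<theta>) (at \<theta> within {\<theta>\<^sub>m..\<theta>\<^sub>M})) \<and>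
              (\<forall>\<theta>\<in>{\<theta>\<^sub>m<..<\<theta>\<^sub>M}. (Q1 has_real_derivative Q2 \<theta>) (at \<theta>)) \<and>
              (\<forall>\<theta>\<in>{\<theta>\<^sub>m<..<\<theta>\<^sub>M}. (- h + \<theta> * lam\<^sup>2 + r) * Q \<theta> + \<alpha> * Q2 \<theta> = 0) \<and>
              Q1 \<theta>\<^sub>m = 0 \<and> Q1 \<theta>\<^sub>M = 0)"

end

theory Submission
  imports Defs
begin

text \<open>With \<open>v\<^sup>\<epsilon> = v + \<epsilon> ln Q\<close>, the two \<open>\<theta>\<close>-terms combine into
  \<open>\<alpha>/\<epsilon> v\<^sup>\<epsilon>\<^sub>\<theta>\<^sub>\<theta> + \<alpha>/\<epsilon>\<^sup>2 (v\<^sup>\<epsilon>\<^sub>\<theta>)\<^sup>2 = \<alpha> Q''/Q\<close>, exactly as in the Hopf--Cole transform,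
  and the eigenvalue equation turns this into \<open>H(\<lambda>) - \<theta>\<lambda>\<^sup>2 - r\<close>. The operator therefore equals
  \<open>v\<^sub>t - H(\<lambda>) - \<epsilon>\<theta>v\<^sub>x\<^sub>x - \<theta>((v\<^sub>x)\<^sup>2 - \<lambda>\<^sup>2)\<close>, which is \<open>-a\<close> at \<open>(x\<^sub>0,t\<^sub>0)\<close> for \<open>\<epsilon> = 0\<close>;
  continuity of \<open>v\<^sub>t\<close>, \<open>v\<^sub>x\<close> and local boundedness of \<open>v\<^sub>x\<^sub>x\<close> keep it below \<open>-a/2\<close> nearby
  for small \<open>\<epsilon>\<close>, uniformly in \<open>\<theta> \<le> \<theta>\<^sub>M\<close>. Only the eigenpair at \<open>\<lambda>\<close> enters.\<close>

lemma has_derivative_uncurry_partials: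
  fixes f :: "real \<Rightarrow> real \<Rightarrow> real"
  assumes "((\<lambda>(x,t). f x t) has_derivative (\<lambda>(h,k). A * h + B * k)) (at (x,t))"
  shows "((\<lambda>x'. f x' t) has_real_derivative A) (at x)"
    and "((\<lambda>t'. f x t') has_real_derivative B) (at t)"
proof -
  have "((\<lambda>x'. (x',t)) has_derivative (\<lambda>h. (h,0))) (at x)"
       "((\<lambda>t'. (x,t')) has_derivative (\<lambda>k. (0,k))) (at t)"
    by (auto intro!: derivative_eq_intros)
  from this[THEN has_derivative_compose, OF assms] show
    "((\<lambda>x'. f x' t) has_real_derivative A) (at x)"
    "((\<lambda>t'. f x t') has_real_derivative B) (at t)"
    by (simp_all add: has_field_derivative_def o_def mult_commute_abs)
qed

lemma smooth2_on_partials: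
  assumes "smooth2_on U f"
  obtains fx ft where
    "\<And>x t. (x,t) \<in> U \<Longrightarrow> ((\<lambda>x'. f x' t) has_real_derivative fx x t) (at x)"
    "\<And>x t. (x,t) \<in> U \<Longrightarrow> ((\<lambda>t'. f x t') has_real_derivative ft x t) (at t)"
    "smooth2_on U fx" "smooth2_on U ft"
proof -
  obtain fx ft where
    D: "\<forall>p\<in>U. ((\<lambda>(x,t). f x t) has_derivative
          (\<lambda>(h,k). fx (fst p) (snd p) * h + ft (fst p) (snd p) * k)) (at p)"
    and "smooth2_on U fx" "smooth2_on U ft"
    using assms by (cases rule: smooth2_on.cases) blast
  moreover have "((\<lambda>x'. f x' t) has_real_derivative fx x t) (at x)"
    and "((\<lambda>t'. f x t') has_real_derivative ft x t) (at t)" if "(x,t) \<in> U" for x t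
    using has_derivative_uncurry_partials[OF D[rule_format, OF that]] by simp_all
  ultimately show thesis
    using that by blast
qed

lemma smooth2_on_isCont:
  assumes "smooth2_on U f" "p \<in> U"
  shows "isCont (\<lambda>(x,t). f x t) p"
  using assms by (cases rule: smooth2_on.cases) (auto dest!: bspec has_derivative_continuous)

lemma deriv_add_const: "deriv (\<lambda>y. f y + c) = deriv (f :: 'a :: real_normed_field \<Rightarrow> 'a)"
proof
  fix x
  have "((\<lambda>y. f y + c) has_field_derivative D) (at x) \<longleftrightarrow> (f has_field_derivative D) (at x)" for D
  proof
    assume "((\<lambda>y. f y + c) has_field_derivative D) (at x)"
    from DERIV_add[OF this DERIV_const[of "- c"]] show "(f has_field_derivative D) (at x)"
      by simp
  qed (auto intro!: derivative_eq_intros)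
  then show "deriv (\<lambda>y. f y + c) x = deriv f x"
    by (simp add: deriv_def)
qed

lemma deriv_deriv_partial:
  fixes f fx :: "real \<Rightarrow> real \<Rightarrow> real"
  assumes "open U" "(x,t) \<in> U"
    and "\<And>x t. (x,t) \<in> U \<Longrightarrow> ((\<lambda>x'. f x' t) has_real_derivative fx x t) (at x)"
    and "((\<lambda>x'. fx x' t) has_real_derivative fxx) (at x)"
  shows "deriv (\<lambda>x'. deriv (\<lambda>x''. f x'' t) x') x = fxx"
proof -
  have "((\<lambda>x'. (x',t)) \<longlongrightarrow> (x,t)) (nhds x)"
    by (intro tendsto_Pair filterlim_ident tendsto_const)
  then have "eventually (\<lambda>x'. (x',t) \<in> U) (nhds x)"
    using assms(1,2) by (auto simp: tendsto_def)
  then have "eventually (\<lambda>x'. deriv (\<lambda>x''. f x'' t) x' = fx x' t) (nhds x)"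
    by eventually_elim (use assms(3) DERIV_imp_deriv in blast)
  with assms(4) show ?thesis
    by (intro DERIV_imp_deriv) (simp add: DERIV_cong_ev[OF refl])
qed

lemma smooth2_on_second_partials:
  assumes "smooth2_on U v" "open U"
  obtains vx vt vxx where
    "\<And>x t. (x,t) \<in> U \<Longrightarrow> deriv (\<lambda>x'. v x' t) x = vx x t"
    "\<And>x t. (x,t) \<in> U \<Longrightarrow> deriv (\<lambda>t'. v x t') t = vt x t"
    "\<And>x t. (x,t) \<in> U \<Longrightarrow> deriv (\<lambda>x'. deriv (\<lambda>x''. v x'' t) x') x = vxx x t"
    "\<And>p. p \<in> U \<Longrightarrow> isCont (\<lambda>(x,t). vx x t) p"
    "\<And>p. p \<in> U \<Longrightarrow> isCont (\<lambda>(x,t). vt x t) p"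
    "\<And>p. p \<in> U \<Longrightarrow> isCont (\<lambda>(x,t). vxx x t) p"
proof -
  obtain vx vt where
    vx: "\<And>x t. (x,t) \<in> U \<Longrightarrow> ((\<lambda>x'. v x' t) has_real_derivative vx x t) (at x)" and
    vt: "\<And>x t. (x,t) \<in> U \<Longrightarrow> ((\<lambda>t'. v x t') has_real_derivative vt x t) (at t)" and
    "smooth2_on U vx" "smooth2_on U vt"
    using smooth2_on_partials[OF assms(1)] by blast
  moreover obtain vxx where
    "\<And>x t. (x,t) \<in> U \<Longrightarrow> ((\<lambda>x'. vx x' t) has_real_derivative vxx x t) (at x)" and
    "smooth2_on U vxx"
    using smooth2_on_partials[OF \<open>smooth2_on U vx\<close>] by metis
  ultimately show thesis
    using that[of vx vt vxx] deriv_deriv_partial[where f = v, OF assms(2) _ vx]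
    by (simp add: DERIV_imp_deriv smooth2_on_isCont)
qed

text \<open>The squared first derivative cancels the \<open>-(Q')\<^sup>2/Q\<^sup>2\<close> part of the second derivative
  of \<open>ln Q\<close>, leaving \<open>Q''/Q\<close>.\<close>

lemma log_transform_second_order:
  fixes Q Q1 :: "real \<Rightarrow> real"
  assumes "open S" "\<theta> \<in> S" "\<And>y. y \<in> S \<Longrightarrow> 0 < Q y"
    and "\<And>y. y \<in> S \<Longrightarrow> (Q has_real_derivative Q1 y) (at y)"
    and "(Q1 has_real_derivative Q2) (at \<theta>)" and "\<epsilon> \<noteq> 0"
  shows "\<alpha> / \<epsilon> * deriv (\<lambda>y. deriv (\<lambda>z. c + \<epsilon> * ln (Q z)) y) \<theta>
           + \<alpha> / \<epsilon>\<^sup>2 * (deriv (\<lambda>y. c + \<epsilon> * ln (Q y)) \<theta>)\<^sup>2 = \<alpha> * Q2 / Q \<theta>"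
proof -
  have Q_pos: "0 < Q \<theta>"
    using assms(2,3) by blast
  have first: "deriv (\<lambda>z. c + \<epsilon> * ln (Q z)) y = \<epsilon> * (Q1 y / Q y)" if "y \<in> S" for y
    using assms(3,4)[OF that]
    by (intro DERIV_imp_deriv) (auto intro!: derivative_eq_intros simp: field_simps)
  have "eventually (\<lambda>y. deriv (\<lambda>z. c + \<epsilon> * ln (Q z)) y = \<epsilon> * (Q1 y / Q y)) (nhds \<theta>)"
    using eventually_nhds_in_open[OF assms(1,2)] by eventually_elim (rule first)
  moreover have "((\<lambda>y. \<epsilon> * (Q1 y / Q y)) has_real_derivative
                   \<epsilon> * ((Q2 * Q \<theta> - Q1 \<theta> * Q1 \<theta>) / (Q \<theta>)\<^sup>2)) (at \<theta>)"
    using assms(4)[OF assms(2)] assms(5) Q_pos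
    by (auto intro!: derivative_eq_intros simp: field_simps power2_eq_square)
  ultimately have second: "deriv (\<lambda>y. deriv (\<lambda>z. c + \<epsilon> * ln (Q z)) y) \<theta>
                             = \<epsilon> * ((Q2 * Q \<theta> - Q1 \<theta> * Q1 \<theta>) / (Q \<theta>)\<^sup>2)"
    by (intro DERIV_imp_deriv) (simp add: DERIV_cong_ev[OF refl])
  show ?thesis
    using assms(2,6) Q_pos
    by (simp add: first second field_simps power2_eq_square)
qed

lemma eigpair_log_transform:
  assumes "eigpair \<theta>\<^sub>m \<theta>\<^sub>M \<alpha> r lam h Q" "\<theta> \<in> {\<theta>\<^sub>m<..<\<theta>\<^sub>M}" "\<epsilon> \<noteq> 0"
  shows "\<alpha> / \<epsilon> * deriv (\<lambda>y. deriv (\<lambda>z. c + \<epsilon> * ln (Q z)) y) \<theta>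
           + \<alpha> / \<epsilon>\<^sup>2 * (deriv (\<lambda>y. c + \<epsilon> * ln (Q y)) \<theta>)\<^sup>2 = h - \<theta> * lam\<^sup>2 - r"
proof -
  obtain Q1 Q2 where pos: "\<forall>y\<in>{\<theta>\<^sub>m..\<theta>\<^sub>M}. 0 < Q y"
    and dQ: "\<forall>y\<in>{\<theta>\<^sub>m..\<theta>\<^sub>M}. (Q has_real_derivative Q1 y) (at y within {\<theta>\<^sub>m..\<theta>\<^sub>M})"
    and dQ1: "\<forall>y\<in>{\<theta>\<^sub>m<..<\<theta>\<^sub>M}. (Q1 has_real_derivative Q2 y) (at y)"
    and eq: "\<forall>y\<in>{\<theta>\<^sub>m<..<\<theta>\<^sub>M}. (- h + y * lam\<^sup>2 + r) * Q y + \<alpha> * Q2 y = 0"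
    using assms(1) unfolding eigpair_def by blast
  have "(Q has_real_derivative Q1 y) (at y)" if "y \<in> {\<theta>\<^sub>m<..<\<theta>\<^sub>M}" for y
  proof -
    have "at y within {\<theta>\<^sub>m..\<theta>\<^sub>M} = at y"
      using that by (intro at_within_interior) simp
    moreover have "(Q has_real_derivative Q1 y) (at y within {\<theta>\<^sub>m..\<theta>\<^sub>M})"
      using dQ that by simp
    ultimately show ?thesis
      by simp
  qed
  then have "\<alpha> / \<epsilon> * deriv (\<lambda>y. deriv (\<lambda>z. c + \<epsilon> * ln (Q z)) y) \<theta>
               + \<alpha> / \<epsilon>\<^sup>2 * (deriv (\<lambda>y. c + \<epsilon> * ln (Q y)) \<theta>)\<^sup>2 = \<alpha> * Q2 \<theta> / Q \<theta>"
    using pos dQ1 assms(2,3)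
    by (intro log_transform_second_order[where S = "{\<theta>\<^sub>m<..<\<theta>\<^sub>M}"]) auto
  also have "\<dots> = h - \<theta> * lam\<^sup>2 - r"
    using eq[rule_format, OF assms(2)] pos[rule_format, of \<theta>] assms(2)
    by (auto simp: field_simps)
  finally show ?thesis .
qed

lemma log_perturbed_operator_le_iff:
  assumes "eigpair \<theta>\<^sub>m \<theta>\<^sub>M \<alpha> r lam h Q" "\<theta> \<in> {\<theta>\<^sub>m<..<\<theta>\<^sub>M}" "\<epsilon> \<noteq> 0"
  shows "(let ve = (\<lambda>x \<theta> t. v x t + \<epsilon> * ln (Q \<theta>)) in
              deriv (\<lambda>t'. ve x \<theta> t') t
              - \<epsilon> * \<theta> * deriv (\<lambda>x'. deriv (\<lambda>x''. ve x'' \<theta> t) x') x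
              - \<theta> * (deriv (\<lambda>x'. ve x' \<theta> t) x)\<^sup>2
              - \<alpha> / \<epsilon> * deriv (\<lambda>\<theta>'. deriv (\<lambda>\<theta>''. ve x \<theta>'' t) \<theta>') \<theta>
              - \<alpha> / \<epsilon>\<^sup>2 * (deriv (\<lambda>\<theta>'. ve x \<theta>' t) \<theta>)\<^sup>2
              - r \<le> c)
         \<longleftrightarrow> deriv (\<lambda>t'. v x t') t - h - \<epsilon> * \<theta> * deriv (\<lambda>x'. deriv (\<lambda>x''. v x'' t) x') x
             - \<theta> * ((deriv (\<lambda>x'. v x' t) x)\<^sup>2 - lam\<^sup>2) \<le> c"
  using eigpair_log_transform[OF assms, of "v x t"]
  by (simp add: Let_def deriv_add_const right_diff_distrib) (rule iffI; linarith)

lemma perturbation_stays_negative: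
  fixes f g k :: "'a::metric_space \<Rightarrow> real"
  assumes "isCont f z" "isCont g z" "isCont k z"
    and "f z - h = - a" "0 < a" "0 < \<theta>\<^sub>M"
  shows "\<exists>s>0. \<exists>e>0. \<forall>p \<theta> \<epsilon>. dist p z < s \<longrightarrow> 0 < \<theta> \<longrightarrow> \<theta> \<le> \<theta>\<^sub>M \<longrightarrow> 0 < \<epsilon> \<longrightarrow> \<epsilon> \<le> e \<longrightarrow>
           f p - h - \<epsilon> * \<theta> * k p - \<theta> * ((g p)\<^sup>2 - (g z)\<^sup>2) \<le> - a / 2"
proof -
  define M where "M = \<bar>k z\<bar> + 1"
  have lim: "(f \<longlongrightarrow> f z) (nhds z)" "(g \<longlongrightarrow> g z) (nhds z)" "(k \<longlongrightarrow> k z) (nhds z)"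
    using assms(1-3) by (simp_all add: isCont_def tendsto_at_iff_tendsto_nhds)
  have "eventually (\<lambda>p. f p < f z + a / 4) (nhds z)"
    using assms(5) by (intro order_tendstoD(2)[OF lim(1)]) simp
  moreover have "eventually (\<lambda>p. \<bar>k p\<bar> < M) (nhds z)"
    unfolding M_def by (intro order_tendstoD(2)[OF tendsto_rabs[OF lim(3)]]) simp
  moreover have "eventually (\<lambda>p. \<bar>(g p)\<^sup>2 - (g z)\<^sup>2\<bar> < a / (8 * \<theta>\<^sub>M)) (nhds z)"
  proof (rule order_tendstoD(2))
    show "((\<lambda>p. \<bar>(g p)\<^sup>2 - (g z)\<^sup>2\<bar>) \<longlongrightarrow> 0) (nhds z)"
      using tendsto_rabs[OF tendsto_diff[OF tendsto_power[OF lim(2), of 2] tendsto_const[of "(g z)\<^sup>2"]]]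
      by simp
    show "0 < a / (8 * \<theta>\<^sub>M)"
      using assms(5,6) by simp
  qed
  ultimately have "eventually (\<lambda>p. f p < f z + a / 4 \<and> \<bar>k p\<bar> < M
               \<and> \<bar>(g p)\<^sup>2 - (g z)\<^sup>2\<bar> < a / (8 * \<theta>\<^sub>M)) (nhds z)"
    by (intro eventually_conj)
  then obtain s where "s > 0" and near: "\<And>p. dist p z < s \<Longrightarrow> f p < f z + a / 4 \<and> \<bar>k p\<bar> < M
               \<and> \<bar>(g p)\<^sup>2 - (g z)\<^sup>2\<bar> < a / (8 * \<theta>\<^sub>M)"
    unfolding eventually_nhds_metric by blast
  define e where "e = a / (8 * \<theta>\<^sub>M * M)"
  have "M > 0" "e > 0"
    using assms(5,6) by (auto simp: M_def e_def)
  have "f p - h - \<epsilon> * \<theta> * k p - \<theta> * ((g p)\<^sup>2 - (g z)\<^sup>2) \<le> - a / 2"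
    if "dist p z < s" "0 < \<theta>" "\<theta> \<le> \<theta>\<^sub>M" "0 < \<epsilon>" "\<epsilon> \<le> e" for p \<theta> \<epsilon>
  proof -
    have "- (\<epsilon> * \<theta> * k p) \<le> \<epsilon> * \<theta> * \<bar>k p\<bar>"
      using abs_ge_minus_self[of "\<epsilon> * \<theta> * k p"] that(2,4) by (simp add: abs_mult)
    also have "\<dots> \<le> e * \<theta>\<^sub>M * M"
      using that near[OF that(1)] by (intro mult_mono) auto
    also have "\<dots> = a / 8"
      using \<open>M > 0\<close> assms(6) by (simp add: e_def)
    finally have diffusion_term: "- (\<epsilon> * \<theta> * k p) \<le> a / 8" .
    have "- (\<theta> * ((g p)\<^sup>2 - (g z)\<^sup>2)) \<le> \<theta> * \<bar>(g p)\<^sup>2 - (g z)\<^sup>2\<bar>"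
      using abs_ge_minus_self[of "\<theta> * ((g p)\<^sup>2 - (g z)\<^sup>2)"] that(2) by (simp add: abs_mult)
    also have "\<dots> \<le> \<theta>\<^sub>M * (a / (8 * \<theta>\<^sub>M))"
      using that near[OF that(1)] by (intro mult_mono) auto
    also have "\<dots> = a / 8"
      using assms(6) by simp
    finally have gradient_term: "- (\<theta> * ((g p)\<^sup>2 - (g z)\<^sup>2)) \<le> a / 8" .
    show ?thesis
      using near[OF that(1)] assms(4) diffusion_term gradient_term by linarith
  qed
  with \<open>s > 0\<close> \<open>e > 0\<close> show ?thesis
    by blast
qed

theorem lemma4p3:
  fixes \<theta>\<^sub>m \<theta>\<^sub>M \<alpha> r a x0 t0 :: real
    and H :: "real \<Rightarrow> real" and Q :: "real \<Rightarrow> real"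
    and v :: "real \<Rightarrow> real \<Rightarrow> real" and U :: "(real \<times> real) set"
  assumes "0 < \<theta>\<^sub>m" and "\<theta>\<^sub>m < \<theta>\<^sub>M" and "0 < \<alpha>" and "0 < r"
    and H_def: "\<forall>lam. (\<exists>Q'. eigpair \<theta>\<^sub>m \<theta>\<^sub>M \<alpha> r lam (H lam) Q') \<and>
                      (\<forall>h Q'. eigpair \<theta>\<^sub>m \<theta>\<^sub>M \<alpha> r lam h Q' \<longrightarrow> h = H lam)"
    and "open U" and "(x0, t0) \<in> U" and "smooth2_on U v"
    and "0 < a"
    and "deriv (\<lambda>t. v x0 t) t0 - H (deriv (\<lambda>x. v x t0) x0) = - a"
    and "eigpair \<theta>\<^sub>m \<theta>\<^sub>M \<alpha> r (deriv (\<lambda>x. v x t0) x0) (H (deriv (\<lambda>x. v x t0) x0)) Q"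
  shows "\<exists>s>0. \<exists>\<epsilon>1>0. \<forall>x t \<theta> \<epsilon>.
           (x, t) \<in> ball (x0, t0) s \<longrightarrow> \<theta> \<in> {\<theta>\<^sub>m<..<\<theta>\<^sub>M} \<longrightarrow> 0 < \<epsilon> \<longrightarrow> \<epsilon> \<le> \<epsilon>1 \<longrightarrow>
           (let ve = (\<lambda>x \<theta> t. v x t + \<epsilon> * ln (Q \<theta>)) in
              deriv (\<lambda>t'. ve x \<theta> t') t
              - \<epsilon> * \<theta> * deriv (\<lambda>x'. deriv (\<lambda>x''. ve x'' \<theta> t) x') x
              - \<theta> * (deriv (\<lambda>x'. ve x' \<theta> t) x)\<^sup>2
              - \<alpha> / \<epsilon> * deriv (\<lambda>\<theta>'. deriv (\<lambda>\<theta>''. ve x \<theta>'' t) \<theta>') \<theta>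
              - \<alpha> / \<epsilon>\<^sup>2 * (deriv (\<lambda>\<theta>'. ve x \<theta>' t) \<theta>)\<^sup>2
              - r \<le> - a / 2)"
proof -
  define lam where "lam = deriv (\<lambda>x. v x t0) x0"
  obtain vx vt vxx where
    derivs: "\<And>x t. (x,t) \<in> U \<Longrightarrow> deriv (\<lambda>x'. v x' t) x = vx x t"
      "\<And>x t. (x,t) \<in> U \<Longrightarrow> deriv (\<lambda>t'. v x t') t = vt x t"
      "\<And>x t. (x,t) \<in> U \<Longrightarrow> deriv (\<lambda>x'. deriv (\<lambda>x''. v x'' t) x') x = vxx x t"
    and cont: "\<And>p. p \<in> U \<Longrightarrow> isCont (\<lambda>(x,t). vx x t) p"
      "\<And>p. p \<in> U \<Longrightarrow> isCont (\<lambda>(x,t). vt x t) p"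
      "\<And>p. p \<in> U \<Longrightarrow> isCont (\<lambda>(x,t). vxx x t) p"
    using smooth2_on_second_partials[OF assms(8,6)] by blast
  have lam: "lam = vx x0 t0"
    using derivs(1)[OF assms(7)] by (simp add: lam_def)
  have gap: "(\<lambda>(x,t). vt x t) (x0,t0) - H lam = - a"
    using assms(10) derivs(2)[OF assms(7)] by (simp add: lam_def)
  have "0 < \<theta>\<^sub>M"
    using assms(1,2) by simp
  obtain s e where "s > 0" "e > 0" and bound:
    "\<forall>p \<theta> \<epsilon>. dist p (x0,t0) < s \<longrightarrow> 0 < \<theta> \<longrightarrow> \<theta> \<le> \<theta>\<^sub>M \<longrightarrow> 0 < \<epsilon> \<longrightarrow> \<epsilon> \<le> e \<longrightarrow>
       (\<lambda>(x,t). vt x t) p - H lam - \<epsilon> * \<theta> * (\<lambda>(x,t). vxx x t) p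
         - \<theta> * (((\<lambda>(x,t). vx x t) p)\<^sup>2 - ((\<lambda>(x,t). vx x t) (x0,t0))\<^sup>2) \<le> - a / 2"
    using perturbation_stays_negative[OF cont(2,1,3)[OF assms(7)] gap assms(9) \<open>0 < \<theta>\<^sub>M\<close>]
    by blast
  obtain d where "d > 0" "ball (x0,t0) d \<subseteq> U"
    using assms(6,7) open_contains_ball by blast
  have near: "deriv (\<lambda>t'. v x t') t - H lam - \<epsilon> * \<theta> * deriv (\<lambda>x'. deriv (\<lambda>x''. v x'' t) x') x
          - \<theta> * ((deriv (\<lambda>x'. v x' t) x)\<^sup>2 - lam\<^sup>2) \<le> - a / 2"
    if "(x,t) \<in> ball (x0,t0) (min s d)" "\<theta> \<in> {\<theta>\<^sub>m<..<\<theta>\<^sub>M}" "0 < \<epsilon>" "\<epsilon> \<le> e"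
    for x t \<theta> \<epsilon>
  proof -
    have "(x,t) \<in> U"
      using that(1) \<open>ball (x0,t0) d \<subseteq> U\<close> by auto
    then show ?thesis
      using that bound[rule_format, of "(x,t)" \<theta> \<epsilon>] derivs[of x t] assms(1)
      by (auto simp: dist_commute lam)
  qed
  show ?thesis
  proof (rule exI[of _ "min s d"], rule conjI[rotated], rule exI[of _ e], rule conjI[rotated],
         intro allI impI, subst log_perturbed_operator_le_iff[OF assms(11)])
  qed (use near \<open>s > 0\<close> \<open>d > 0\<close> \<open>e > 0\<close> in \<open>auto simp: lam_def\<close>)
qed

end
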